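(* In the setting described in the context, for any slot allocation $\tau$ of the slot set $\Lambda$, the associated service placement $X^\tau$ is feasible, i.e. $\sum_{i\in S}s_i\mathbf 1[j\in X^\tau_i]\le c_j$ for all $j\in V$.
   Context: An SPSC instance: finite sets $S$ (services), $V$ (nodes), $U$ (users); sizes $s_i>0$; capacities $c_j>0$; for each user $k$ a service $i_k\in S$, a set $T_k\subseteq V$, a reward $w_k>0$. A service placement $X=\{X_i\subseteq V:i\in S\}$ is feasible iff $\sum_is_i\mathbf 1[j\in X_i]\le c_j$ for all $j$. Let $\{x_{ij}\},\{y_k\}$ be an optimal solution of the LP with nonnegative variables: maximize $\sum_ky_kw_k$ s.t. $y_k\le\sum_{j\in T_k}x_{i_kj}$, $y_k\le1$; $\sum_ix_{ij}s_i\le c_j$; $x_{ij}=0$ if $s_i>c_j$; $0\le x_{ij}\le1$. Fix $\beta<1$ with $\max_is_i\le\beta\min_jc_j$; $\gamma:=1-\sqrt\beta$, $\delta:=(1-\sqrt\beta)^2$, $\mathbb N=\{1,2,\dots\}$. For $j\in V,q\in\mathbb N$: $P_j^q:=\{i\in S:\gamma^qc_j\beta<s_i\le\gamma^{q-1}c_j\beta\}$, $d_j^q:=\sum_{i\in P_j^q}x_{ij}$, $v_j:=\delta c_j/\sum_{i\in S}s_ix_{ij}$, $n_j^q:=\lceil v_jd_j^q\rceil$. The slot set $\Lambda$: for every $j,q$ with $P_j^q\ne\emptyset$ create $n_j^q$ slots $\sigma$ with node $\nu(\sigma)=j$ and class $\kappa(\sigma)=q$. A slot allocation is $\tau:\Lambda\to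 S$ with $\tau(\sigma)\in P^{\kappa(\sigma)}_{\nu(\sigma)}$; its associated placement is $X^\tau_i:=\{j\in V:\exists\sigma\in\Lambda,\ \nu(\sigma)=j,\ \tau(\sigma)=i\}$. *)

theory Defs
  imports Complex_Main
begin

text \<open>SPSC instance: services of type 's, nodes of type 'v, users of type 'u, with finite
  carrier sets S, V, U; sizes sz, capacities c; user k requests service ik k, can be served
  from nodes T k, and has reward w k.\<close>

definition lp_feasible ::
  "'s set \<Rightarrow> 'v set \<Rightarrow> 'u set \<Rightarrow> ('s \<Rightarrow> real) \<Rightarrow> ('v \<Rightarrow> real) \<Rightarrow> ('u \<Rightarrow> 's) \<Rightarrow> ('u \<Rightarrow> 'v set)
   \<Rightarrow> ('s \<Rightarrow> 'v \<Rightarrow> real) \<Rightarrow> ('u \<Rightarrow> real) \<Rightarrow> bool" where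
  "lp_feasible S V U sz c ik T x y \<longleftrightarrow>
     (\<forall>k\<in>U. 0 \<le> y k \<and> y k \<le> 1 \<and> y k \<le> (\<Sum>j\<in>T k. x (ik k) j)) \<and>
     (\<forall>j\<in>V. (\<Sum>i\<in>S. x i j * sz i) \<le> c j) \<and>
     (\<forall>i\<in>S. \<forall>j\<in>V. 0 \<le> x i j \<and> x i j \<le> 1 \<and> (sz i > c j \<longrightarrow> x i j = 0))"

definition lp_optimal ::
  "'s set \<Rightarrow> 'v set \<Rightarrow> 'u set \<Rightarrow> ('s \<Rightarrow> real) \<Rightarrow> ('v \<Rightarrow> real) \<Rightarrow> ('u \<Rightarrow> 's) \<Rightarrow> ('u \<Rightarrow> 'v set)
   \<Rightarrow> ('u \<Rightarrow> real) \<Rightarrow> ('s \<Rightarrow> 'v \<Rightarrow> real) \<Rightarrow> ('u \<Rightarrow> real) \<Rightarrow> bool" where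
  "lp_optimal S V U sz c ik T w x y \<longleftrightarrow>
     lp_feasible S V U sz c ik T x y \<and>
     (\<forall>x' y'. lp_feasible S V U sz c ik T x' y' \<longrightarrow>
        (\<Sum>k\<in>U. y' k * w k) \<le> (\<Sum>k\<in>U. y k * w k))"

definition placement_feasible ::
  "'s set \<Rightarrow> 'v set \<Rightarrow> ('s \<Rightarrow> real) \<Rightarrow> ('v \<Rightarrow> real) \<Rightarrow> ('s \<Rightarrow> 'v set) \<Rightarrow> bool" where
  "placement_feasible S V sz c X \<longleftrightarrow>
     (\<forall>j\<in>V. (\<Sum>i\<in>S. sz i * (if j \<in> X i then 1 else 0)) \<le> c j)"

definition sclass :: "'s set \<Rightarrow> ('s \<Rightarrow> real) \<Rightarrow> ('v \<Rightarrow> real) \<Rightarrow> real \<Rightarrow> 'v \<Rightarrow> nat \<Rightarrow> 's set" where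
  "sclass S sz c \<beta> j q =
     {i\<in>S. (1 - sqrt \<beta>) ^ q * c j * \<beta> < sz i \<and> sz i \<le> (1 - sqrt \<beta>) ^ (q - 1) * c j * \<beta>}"

definition dval :: "'s set \<Rightarrow> ('s \<Rightarrow> real) \<Rightarrow> ('v \<Rightarrow> real) \<Rightarrow> real \<Rightarrow> ('s \<Rightarrow> 'v \<Rightarrow> real) \<Rightarrow> 'v \<Rightarrow> nat \<Rightarrow> real" where
  "dval S sz c \<beta> x j q = (\<Sum>i\<in>sclass S sz c \<beta> j q. x i j)"

definition vval :: "'s set \<Rightarrow> ('s \<Rightarrow> real) \<Rightarrow> ('v \<Rightarrow> real) \<Rightarrow> real \<Rightarrow> ('s \<Rightarrow> 'v \<Rightarrow> real) \<Rightarrow> 'v \<Rightarrow> real" where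
  "vval S sz c \<beta> x j = (1 - sqrt \<beta>)^2 * c j / (\<Sum>i\<in>S. sz i * x i j)"

definition nslots :: "'s set \<Rightarrow> ('s \<Rightarrow> real) \<Rightarrow> ('v \<Rightarrow> real) \<Rightarrow> real \<Rightarrow> ('s \<Rightarrow> 'v \<Rightarrow> real) \<Rightarrow> 'v \<Rightarrow> nat \<Rightarrow> nat" where
  "nslots S sz c \<beta> x j q = nat \<lceil>vval S sz c \<beta> x j * dval S sz c \<beta> x j q\<rceil>"

text \<open>Slots are triples (j, q, m): node nu = j, class kappa = q, and index m < n_j^q.\<close>
definition slots :: "'s set \<Rightarrow> 'v set \<Rightarrow> ('s \<Rightarrow> real) \<Rightarrow> ('v \<Rightarrow> real) \<Rightarrow> real \<Rightarrow> ('s \<Rightarrow> 'v \<Rightarrow> real)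
    \<Rightarrow> ('v \<times> nat \<times> nat) set" where
  "slots S V sz c \<beta> x = {(j, q, m). j \<in> V \<and> q \<ge> 1 \<and> sclass S sz c \<beta> j q \<noteq> {} \<and> m < nslots S sz c \<beta> x j q}"

definition slot_node :: "'v \<times> nat \<times> nat \<Rightarrow> 'v" where "slot_node \<sigma> = fst \<sigma>"
definition slot_class :: "'v \<times> nat \<times> nat \<Rightarrow> nat" where "slot_class \<sigma> = fst (snd \<sigma>)"

definition slot_allocation ::
  "'s set \<Rightarrow> 'v set \<Rightarrow> ('s \<Rightarrow> real) \<Rightarrow> ('v \<Rightarrow> real) \<Rightarrow> real \<Rightarrow> ('s \<Rightarrow> 'v \<Rightarrow> real)
   \<Rightarrow> ('v \<times> nat \<times> nat \<Rightarrow> 's) \<Rightarrow> bool" where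
  "slot_allocation S V sz c \<beta> x \<tau> \<longleftrightarrow>
     (\<forall>\<sigma>\<in>slots S V sz c \<beta> x. \<tau> \<sigma> \<in> sclass S sz c \<beta> (slot_node \<sigma>) (slot_class \<sigma>))"

definition alloc_placement ::
  "'s set \<Rightarrow> 'v set \<Rightarrow> ('s \<Rightarrow> real) \<Rightarrow> ('v \<Rightarrow> real) \<Rightarrow> real \<Rightarrow> ('s \<Rightarrow> 'v \<Rightarrow> real)
   \<Rightarrow> ('v \<times> nat \<times> nat \<Rightarrow> 's) \<Rightarrow> 's \<Rightarrow> 'v set" where
  "alloc_placement S V sz c \<beta> x \<tau> i =
     {j\<in>V. \<exists>\<sigma>\<in>slots S V sz c \<beta> x. slot_node \<sigma> = j \<and> \<tau> \<sigma> = i}"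

end

theory Submission
  imports Defs
begin

text \<open>Fix a node j and write \<open>\<gamma> = 1 - sqrt \<beta>\<close>. Every service placed on j occupies a slot of j,
  and a slot of class q holds a service of size at most \<open>\<gamma>^(q-1) c\<^sub>j \<beta>\<close>. Since there are at
  most \<open>v\<^sub>j d\<^sub>j\<^sup>q + 1\<close> slots of class q, the load of j is at most
  \<open>v\<^sub>j \<Sum>\<^sub>q d\<^sub>j\<^sup>q \<gamma>^(q-1) c\<^sub>j \<beta> + c\<^sub>j \<beta> \<Sum>\<^sub>q \<gamma>^(q-1)\<close>. Each service of class q has size above
  \<open>\<gamma>^q c\<^sub>j \<beta>\<close>, so the first sum is below \<open>(\<Sum>\<^sub>i s\<^sub>i x\<^sub>i\<^sub>j)/\<gamma>\<close> and the first term is at most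
  \<open>\<delta> c\<^sub>j/\<gamma> = \<gamma> c\<^sub>j\<close>; the geometric series bounds the second term by \<open>c\<^sub>j \<beta>/(1-\<gamma>) = sqrt \<beta> c\<^sub>j\<close>.
  The two add up to exactly \<open>c\<^sub>j\<close>.\<close>

lemma geometric_band_unique:
  fixes g a s :: real
  assumes "0 \<le> g" "g \<le> 1" "0 \<le> a" "1 \<le> q" "1 \<le> q'"
    and "g ^ q * a < s" "s \<le> g ^ (q - 1) * a"
    and "g ^ q' * a < s" "s \<le> g ^ (q' - 1) * a"
  shows "q = q'"
proof -
  have no_gap: False if "p < p'" "g ^ p * a < s" "s \<le> g ^ (p' - 1) * a" for p p' :: nat
  proof -
    have "g ^ (p' - 1) \<le> g ^ p"
      using \<open>p < p'\<close> assms(1,2) by (intro power_decreasing) auto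
    then have "g ^ (p' - 1) * a \<le> g ^ p * a"
      using assms(3) by (rule mult_right_mono)
    then show False using that by linarith
  qed
  show ?thesis
    using no_gap[of q q'] no_gap[of q' q] assms(6-9) by (cases q q' rule: linorder_cases) auto
qed

lemma sclass_subset: "sclass S sz c \<beta> j q \<subseteq> S"
  unfolding sclass_def by auto

lemma sclass_unique:
  assumes "0 \<le> \<beta>" "\<beta> \<le> 1" "0 \<le> c j" "1 \<le> q" "1 \<le> q'"
    and "i \<in> sclass S sz c \<beta> j q" "i \<in> sclass S sz c \<beta> j q'"
  shows "q = q'"
  by (rule geometric_band_unique[where g = "1 - sqrt \<beta>" and a = "c j * \<beta>" and s = "sz i"])
    (use assms in \<open>auto simp: sclass_def mult.assoc\<close>)

lemma finite_nonempty_sclasses: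
  assumes "finite S" "0 \<le> \<beta>" "\<beta> \<le> 1" "0 \<le> c j"
  shows "finite {q. 1 \<le> q \<and> sclass S sz c \<beta> j q \<noteq> {}}"
proof -
  have at_most_one: "finite {q. 1 \<le> q \<and> i \<in> sclass S sz c \<beta> j q}" (is "finite ?C") for i
  proof (cases "?C = {}")
    case False
    then obtain q where q: "q \<in> ?C" by blast
    have "?C \<subseteq> {q}"
      using sclass_unique[where c = c and j = j, OF assms(2-4)] q by auto
    then show ?thesis by (rule finite_subset) simp
  qed (metis finite.emptyI)
  have "{q. 1 \<le> q \<and> sclass S sz c \<beta> j q \<noteq> {}} \<subseteq> (\<Union>i\<in>S. {q. 1 \<le> q \<and> i \<in> sclass S sz c \<beta> j q})"
    using sclass_subset by fastforce
  moreover have "finite (\<Union>i\<in>S. {q. 1 \<le> q \<and> i \<in> sclass S sz c \<beta> j q})"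
    using assms(1) at_most_one by simp
  ultimately show ?thesis by (rule finite_subset)
qed

lemma slots_at_node:
  assumes "j \<in> V"
  shows "{\<sigma> \<in> slots S V sz c \<beta> x. slot_node \<sigma> = j} =
    (\<lambda>(q, m). (j, q, m)) ` (SIGMA q:{q. 1 \<le> q \<and> sclass S sz c \<beta> j q \<noteq> {}}. {..<nslots S sz c \<beta> x j q})"
  using assms unfolding slots_def slot_node_def by auto

definition sclass_bound :: "real \<Rightarrow> ('v \<Rightarrow> real) \<Rightarrow> 'v \<Rightarrow> nat \<Rightarrow> real" where
  "sclass_bound \<beta> c j q = (1 - sqrt \<beta>) ^ (q - 1) * c j * \<beta>"

lemma sclass_bound_nonneg: "0 \<le> \<beta> \<Longrightarrow> \<beta> \<le> 1 \<Longrightarrow> 0 \<le> c j \<Longrightarrow> 0 \<le> sclass_bound \<beta> c j q"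
  unfolding sclass_bound_def by simp

lemma size_le_sclass_bound: "i \<in> sclass S sz c \<beta> j q \<Longrightarrow> sz i \<le> sclass_bound \<beta> c j q"
  unfolding sclass_def sclass_bound_def by simp

lemma sclass_bound_lt_size:
  assumes "1 \<le> q" "i \<in> sclass S sz c \<beta> j q"
  shows "(1 - sqrt \<beta>) * sclass_bound \<beta> c j q < sz i"
proof -
  have "(1 - sqrt \<beta>) ^ q = (1 - sqrt \<beta>) * (1 - sqrt \<beta>) ^ (q - 1)"
    using assms(1) by (simp flip: power_Suc)
  then show ?thesis using assms(2) unfolding sclass_def sclass_bound_def by (simp add: mult.assoc)
qed

lemma placement_load_le_slot_capacity:
  assumes "finite S" "\<forall>i\<in>S. 0 \<le> sz i" "j \<in> V" "0 \<le> \<beta>" "\<beta> \<le> 1" "0 \<le> c j"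
    and "slot_allocation S V sz c \<beta> x \<tau>"
  defines "Q \<equiv> {q. 1 \<le> q \<and> sclass S sz c \<beta> j q \<noteq> {}}"
  shows "(\<Sum>i\<in>S. sz i * (if j \<in> alloc_placement S V sz c \<beta> x \<tau> i then 1 else 0))
    \<le> (\<Sum>q\<in>Q. real (nslots S sz c \<beta> x j q) * sclass_bound \<beta> c j q)"
proof -
  define slots_j where "slots_j = {\<sigma> \<in> slots S V sz c \<beta> x. slot_node \<sigma> = j}"
  define I where "I = (SIGMA q:Q. {..<nslots S sz c \<beta> x j q})"
  have slots_j_eq: "slots_j = (\<lambda>(q, m). (j, q, m)) ` I"
    unfolding slots_j_def I_def Q_def using slots_at_node[OF assms(3)] .
  have "finite Q" unfolding Q_def using finite_nonempty_sclasses assms(1,4-6) .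
  then have "finite I" unfolding I_def by simp
  then have "finite slots_j" unfolding slots_j_eq by simp
  have in_sclass: "\<tau> (j, q, m) \<in> sclass S sz c \<beta> j q" if "(q, m) \<in> I" for q m
  proof -
    have "(j, q, m) \<in> slots_j" using that unfolding slots_j_eq by force
    then have "(j, q, m) \<in> slots S V sz c \<beta> x" unfolding slots_j_def by blast
    then show ?thesis using assms(7) by (auto simp: slot_allocation_def slot_node_def slot_class_def)
  qed
  then have tau_S: "\<tau> ` slots_j \<subseteq> S" unfolding slots_j_eq using sclass_subset by fast
  have "(\<Sum>i\<in>S. sz i * (if j \<in> alloc_placement S V sz c \<beta> x \<tau> i then 1 else 0))
      = sum sz {i \<in> S. j \<in> alloc_placement S V sz c \<beta> x \<tau> i}"
    using assms(1) by (simp add: sum.inter_filter if_distrib cong: if_cong)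
  also have "\<dots> \<le> sum sz (\<tau> ` slots_j)"
    using \<open>finite slots_j\<close> tau_S assms(2)
    by (intro sum_mono2) (auto simp: alloc_placement_def slots_j_def)
  also have "\<dots> \<le> sum (sz \<circ> \<tau>) slots_j"
    using \<open>finite slots_j\<close> tau_S assms(2) by (intro sum_image_le) auto
  also have "\<dots> = (\<Sum>(q, m)\<in>I. sz (\<tau> (j, q, m)))"
    unfolding slots_j_eq by (subst sum.reindex) (auto simp: inj_on_def case_prod_beta)
  also have "\<dots> = (\<Sum>q\<in>Q. \<Sum>m<nslots S sz c \<beta> x j q. sz (\<tau> (j, q, m)))"
    unfolding I_def using \<open>finite Q\<close> by (subst sum.Sigma) auto
  also have "\<dots> \<le> (\<Sum>q\<in>Q. \<Sum>m<nslots S sz c \<beta> x j q. sclass_bound \<beta> c j q)"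
    using in_sclass unfolding I_def by (intro sum_mono size_le_sclass_bound) blast
  finally show ?thesis by simp
qed

lemma real_nat_ceiling_le: "0 \<le> r \<Longrightarrow> real (nat \<lceil>r\<rceil>) \<le> r + 1"
  by linarith

lemma sum_power_pred_le:
  fixes g :: real
  assumes "0 \<le> g" "g < 1" "finite Q" "\<forall>q\<in>Q. 1 \<le> q"
  shows "(\<Sum>q\<in>Q. g ^ (q - 1)) \<le> 1 / (1 - g)"
proof -
  have "inj_on (\<lambda>q. q - 1) Q"
  proof (rule inj_onI)
    fix q q' assume "q \<in> Q" "q' \<in> Q" "q - 1 = q' - 1"
    moreover have "1 \<le> q" "1 \<le> q'" using assms(4) \<open>q \<in> Q\<close> \<open>q' \<in> Q\<close> by auto
    ultimately show "q = q'" by arith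
  qed
  then have "(\<Sum>q\<in>Q. g ^ (q - 1)) = (\<Sum>k\<in>(\<lambda>q. q - 1) ` Q. g ^ k)"
    by (simp add: sum.reindex)
  also have "\<dots> \<le> (\<Sum>k. g ^ k)"
    using assms by (intro sum_le_suminf) auto
  also have "\<dots> = 1 / (1 - g)"
    using assms by (intro suminf_geometric) auto
  finally show ?thesis .
qed

text \<open>An inequality rather than an equation: for zero load \<open>vval\<close> is 0 by division by zero.\<close>
lemma vval_mul_load_le:
  "0 \<le> c j \<Longrightarrow> vval S sz c \<beta> x j * (\<Sum>i\<in>S. sz i * x i j) \<le> (1 - sqrt \<beta>)\<^sup>2 * c j"
  unfolding vval_def by (cases "(\<Sum>i\<in>S. sz i * x i j) = 0") auto

lemma dval_weighted_le_load:
  assumes "finite S" "\<forall>i\<in>S. 0 \<le> sz i" "\<forall>i\<in>S. 0 \<le> x i j"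
    and "0 \<le> \<beta>" "\<beta> < 1" "0 \<le> c j" "finite Q" "\<forall>q\<in>Q. 1 \<le> q"
  shows "(\<Sum>q\<in>Q. dval S sz c \<beta> x j q * sclass_bound \<beta> c j q)
    \<le> (\<Sum>i\<in>S. sz i * x i j) / (1 - sqrt \<beta>)"
proof -
  let ?\<gamma> = "1 - sqrt \<beta>"
  have "?\<gamma> > 0" using assms(4,5) by simp
  have class_le: "dval S sz c \<beta> x j q * sclass_bound \<beta> c j q
      \<le> (\<Sum>i\<in>sclass S sz c \<beta> j q. sz i * x i j / ?\<gamma>)" if "q \<in> Q" for q
    unfolding dval_def sum_distrib_right
  proof (rule sum_mono)
    fix i assume i: "i \<in> sclass S sz c \<beta> j q"
    have "?\<gamma> * sclass_bound \<beta> c j q < sz i"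
      using sclass_bound_lt_size[OF _ i] assms(8) that by blast
    then have "sclass_bound \<beta> c j q \<le> sz i / ?\<gamma>"
      using \<open>?\<gamma> > 0\<close> by (simp add: pos_le_divide_eq mult.commute)
    moreover have "0 \<le> x i j" using assms(3) subsetD[OF sclass_subset i] by blast
    ultimately have "x i j * sclass_bound \<beta> c j q \<le> x i j * (sz i / ?\<gamma>)"
      by (rule mult_left_mono)
    then show "x i j * sclass_bound \<beta> c j q \<le> sz i * x i j / ?\<gamma>"
      by (simp add: mult.commute)
  qed
  have disjoint: "sclass S sz c \<beta> j q \<inter> sclass S sz c \<beta> j q' = {}"
    if "q \<in> Q" "q' \<in> Q" "q \<noteq> q'" for q q'
  proof -
    have "1 \<le> q" "1 \<le> q'" using assms(8) that(1,2) by auto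
    then show ?thesis
      using sclass_unique[where c = c and j = j, OF assms(4) less_imp_le[OF assms(5)] assms(6)] that(3)
      by (meson disjoint_iff)
  qed
  have "(\<Sum>q\<in>Q. dval S sz c \<beta> x j q * sclass_bound \<beta> c j q)
      \<le> (\<Sum>q\<in>Q. \<Sum>i\<in>sclass S sz c \<beta> j q. sz i * x i j / ?\<gamma>)"
    using class_le by (rule sum_mono)
  also have "\<dots> = (\<Sum>i\<in>(\<Union>q\<in>Q. sclass S sz c \<beta> j q). sz i * x i j / ?\<gamma>)"
  proof (rule sum.UNION_disjoint[symmetric])
    show "\<forall>q\<in>Q. finite (sclass S sz c \<beta> j q)"
      by (intro ballI finite_subset[OF sclass_subset assms(1)])
    show "\<forall>q\<in>Q. \<forall>q'\<in>Q. q \<noteq> q' \<longrightarrow> sclass S sz c \<beta> j q \<inter> sclass S sz c \<beta> j q' = {}"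
      using disjoint by blast
  qed fact
  also have "\<dots> \<le> (\<Sum>i\<in>S. sz i * x i j / ?\<gamma>)"
  proof (rule sum_mono2)
    show "(\<Union>q\<in>Q. sclass S sz c \<beta> j q) \<subseteq> S" by (intro UN_least sclass_subset)
    show "0 \<le> sz i * x i j / ?\<gamma>" if "i \<in> S - (\<Union>q\<in>Q. sclass S sz c \<beta> j q)" for i
      using that assms(2,3) \<open>?\<gamma> > 0\<close> by simp
  qed fact
  also have "\<dots> = (\<Sum>i\<in>S. sz i * x i j) / ?\<gamma>"
    by (simp add: sum_divide_distrib)
  finally show ?thesis .
qed

lemma sum_sclass_bound_le:
  assumes "0 < \<beta>" "\<beta> < 1" "0 \<le> c j" "finite Q" "\<forall>q\<in>Q. 1 \<le> q"
  shows "(\<Sum>q\<in>Q. sclass_bound \<beta> c j q) \<le> sqrt \<beta> * c j"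
proof -
  have "(\<Sum>q\<in>Q. sclass_bound \<beta> c j q) = c j * \<beta> * (\<Sum>q\<in>Q. (1 - sqrt \<beta>) ^ (q - 1))"
    unfolding sclass_bound_def sum_distrib_left by (simp add: ac_simps)
  also have "\<dots> \<le> c j * \<beta> * (1 / (1 - (1 - sqrt \<beta>)))"
    using assms by (intro mult_left_mono sum_power_pred_le) auto
  also have "\<dots> = c j * (\<beta> / sqrt \<beta>)"
    by simp
  also have "\<dots> = sqrt \<beta> * c j"
    using assms(1) by (subst real_div_sqrt) auto
  finally show ?thesis .
qed

lemma slot_capacity_le_capacity:
  assumes "finite S" "\<forall>i\<in>S. 0 \<le> sz i" "\<forall>i\<in>S. 0 \<le> x i j"
    and "0 < \<beta>" "\<beta> < 1" "0 \<le> c j" "finite Q" "\<forall>q\<in>Q. 1 \<le> q"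
  shows "(\<Sum>q\<in>Q. real (nslots S sz c \<beta> x j q) * sclass_bound \<beta> c j q) \<le> c j"
proof -
  let ?\<gamma> = "1 - sqrt \<beta>"
  let ?v = "vval S sz c \<beta> x j" and ?d = "dval S sz c \<beta> x j" and ?b = "sclass_bound \<beta> c j"
  let ?W = "\<Sum>i\<in>S. sz i * x i j"
  have "?\<gamma> > 0" using assms(4,5) by simp
  have "0 \<le> ?W" using assms(2,3) by (simp add: sum_nonneg)
  then have "0 \<le> ?v" using assms(6) unfolding vval_def by simp
  have "0 \<le> ?d q" for q
    unfolding dval_def using assms(3) sclass_subset[of S sz c \<beta> j q] by (intro sum_nonneg) blast
  have "(\<Sum>q\<in>Q. real (nslots S sz c \<beta> x j q) * ?b q) \<le> (\<Sum>q\<in>Q. (?v * ?d q + 1) * ?b q)"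
    unfolding nslots_def using \<open>0 \<le> ?v\<close> \<open>\<And>q. 0 \<le> ?d q\<close> assms(4-6)
    by (intro sum_mono mult_right_mono real_nat_ceiling_le sclass_bound_nonneg) auto
  also have "\<dots> = ?v * (\<Sum>q\<in>Q. ?d q * ?b q) + (\<Sum>q\<in>Q. ?b q)"
    by (simp add: algebra_simps sum.distrib sum_distrib_left)
  also have "\<dots> \<le> ?\<gamma> * c j + sqrt \<beta> * c j"
  proof (rule add_mono)
    have "?v * (\<Sum>q\<in>Q. ?d q * ?b q) \<le> ?v * (?W / ?\<gamma>)"
      using assms \<open>0 \<le> ?v\<close> by (intro mult_left_mono dval_weighted_le_load) auto
    also have "\<dots> \<le> ?\<gamma>\<^sup>2 * c j / ?\<gamma>"
      using vval_mul_load_le[where S = S and sz = sz and \<beta> = \<beta> and x = x and c = c and j = j]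
        assms(6) \<open>?\<gamma> > 0\<close>
      by (simp add: divide_right_mono)
    also have "\<dots> = ?\<gamma> * c j"
      using \<open>?\<gamma> > 0\<close> by (simp add: power2_eq_square)
    finally show "?v * (\<Sum>q\<in>Q. ?d q * ?b q) \<le> ?\<gamma> * c j" .
    show "(\<Sum>q\<in>Q. ?b q) \<le> sqrt \<beta> * c j"
      using assms(4-8) by (rule sum_sclass_bound_le)
  qed
  also have "\<dots> = c j" by (simp add: algebra_simps)
  finally show ?thesis .
qed

theorem theorem4:
  fixes S :: "'s set" and V :: "'v set" and U :: "'u set"
    and sz :: "'s \<Rightarrow> real" and c :: "'v \<Rightarrow> real"
    and ik :: "'u \<Rightarrow> 's" and T :: "'u \<Rightarrow> 'v set" and w :: "'u \<Rightarrow> real"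
    and x :: "'s \<Rightarrow> 'v \<Rightarrow> real" and y :: "'u \<Rightarrow> real"
    and \<beta> :: real and \<tau> :: "'v \<times> nat \<times> nat \<Rightarrow> 's"
  assumes "finite S" "finite V" "finite U"
    and "\<forall>i\<in>S. sz i > 0" and "\<forall>j\<in>V. c j > 0"
    and "\<forall>k\<in>U. ik k \<in> S \<and> T k \<subseteq> V \<and> w k > 0"
    and "lp_optimal S V U sz c ik T w x y"
    and "\<beta> < 1" and "\<forall>i\<in>S. \<forall>j\<in>V. sz i \<le> \<beta> * c j"
    and "slot_allocation S V sz c \<beta> x \<tau>"
  shows "placement_feasible S V sz c (alloc_placement S V sz c \<beta> x \<tau>)"
  unfolding placement_feasible_def
proof
  fix j assume "j \<in> V"
  then have "0 < c j" using assms(5) by blast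
  show "(\<Sum>i\<in>S. sz i * (if j \<in> alloc_placement S V sz c \<beta> x \<tau> i then 1 else 0)) \<le> c j"
  proof (cases "S = {}")
    case True
    then show ?thesis using \<open>0 < c j\<close> by simp
  next
    case False
    then obtain i where "i \<in> S" by blast
    then have "0 < \<beta> * c j" using assms(4,9) \<open>j \<in> V\<close> by (meson less_le_trans)
    then have "0 < \<beta>" using \<open>0 < c j\<close> by (rule zero_less_mult_pos2)
    have sz_nonneg: "\<forall>i\<in>S. 0 \<le> sz i" using assms(4) by (simp add: less_imp_le)
    have x_nonneg: "\<forall>i\<in>S. 0 \<le> x i j"
      using assms(7) \<open>j \<in> V\<close> unfolding lp_optimal_def lp_feasible_def by blast
    let ?Q = "{q. 1 \<le> q \<and> sclass S sz c \<beta> j q \<noteq> {}}"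
    have "finite ?Q"
      using assms(1,8) \<open>0 < \<beta>\<close> \<open>0 < c j\<close> by (intro finite_nonempty_sclasses) auto
    have "(\<Sum>i\<in>S. sz i * (if j \<in> alloc_placement S V sz c \<beta> x \<tau> i then 1 else 0))
        \<le> (\<Sum>q\<in>?Q. real (nslots S sz c \<beta> x j q) * sclass_bound \<beta> c j q)"
      using assms(1,8,10) sz_nonneg \<open>j \<in> V\<close> \<open>0 < \<beta>\<close> \<open>0 < c j\<close>
      by (intro placement_load_le_slot_capacity) auto
    also have "\<dots> \<le> c j"
      using assms(1,8) sz_nonneg x_nonneg \<open>0 < \<beta>\<close> \<open>0 < c j\<close> \<open>finite ?Q\<close>
      by (intro slot_capacity_le_capacity) auto
    finally show ?thesis .
  qed
qed

end
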